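(* Fix integers $0\le k\le n$ and on $\mathbb{C}^n=\mathbb{R}^n_x\oplus\sqrt{-1}\mathbb{R}^n_y$ let $\rho_1=\sum_{i=1}^n x_i^2$, $\rho_2=\sum_{i=1}^k x_i^2+\sum_{i=k+1}^n y_i^2$, $|x|:=\sqrt{\rho_1}$, $|y|:=\sqrt{\rho_2}$, and $L_1=\{\rho_1=0\}$, $L_2=\{\rho_2=0\}$. For $r>0$ set $V_r=\{|x|<r\}\cup\{|y|<r\}$. Then for $r>0$ small enough there exist $0<D<1$ and a nonnegative function $\beta_r:\mathbb{C}^n\to\mathbb{R}$ whose restriction to $V_{Dr}$ is weakly plurisubharmonic and which satisfies \[\beta_r=|y|^2\ \text{on}\ \{|x|\ge r\}\cap V_{Dr},\qquad \beta_r=|x|^2\ \text{on}\ \{|y|\ge r\}\cap V_{Dr}.\] Furthermore, $\beta_r$ vanishes at least to first order on $L_1$ and on $L_2$, and the pseudometric $dd^c\beta_r(\cdot,\sqrt{-1}\cdot)$ is dominated above by the Euclidean metric $g$ everywhere and is equivalent to $g$ on $\{|y|>r\}\cap V_{Dr}$ and on $\{|x|>r\}\cap V_{Dr}$.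
   Context: Weak plurisubharmonicity of a function $f$ means that the Levi form $dd^cf(\cdot,\sqrt{-1}\cdot)$ is positive semidefinite; this symmetric form is called the pseudometric induced by $f$. Two (pseudo)metrics are equivalent if each is bounded by a positive constant multiple of the other. *)

theory Defs
  imports "HOL-Analysis.Analysis"
begin

text \<open>We model \<open>\<complex>\<^sup>n\<close> as \<open>complex ^ 'n\<close> for a finite linearly ordered index type
  \<open>'n\<close> (so \<open>n = CARD('n)\<close>); the real coordinates are \<open>x_i = Re (z$i)\<close>, \<open>y_i = Im (z$i)\<close>.\<close>

definition first_coords :: "nat \<Rightarrow> ('n::{finite,linorder}) set" where
  "first_coords k = {i. card {j. j < i} < k}"

definition rho1 :: "complex ^ 'n \<Rightarrow> real" where
  "rho1 z = (\<Sum>i\<in>UNIV. (Re (z $ i))\<^sup>2)"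

definition rho2 :: "nat \<Rightarrow> complex ^ ('n::{finite,linorder}) \<Rightarrow> real" where
  "rho2 k z = (\<Sum>i\<in>first_coords k. (Re (z $ i))\<^sup>2) + (\<Sum>i\<in>UNIV - first_coords k. (Im (z $ i))\<^sup>2)"

definition Vset :: "nat \<Rightarrow> real \<Rightarrow> (complex ^ ('n::{finite,linorder})) set" where
  "Vset k r = {z. sqrt (rho1 z) < r} \<union> {z. sqrt (rho2 k z) < r}"

definition Jmul :: "complex ^ 'n \<Rightarrow> complex ^ 'n" where
  "Jmul v = (\<chi> i. \<i> * v $ i)"

definition hess :: "(complex ^ 'n \<Rightarrow> real) \<Rightarrow> complex ^ 'n \<Rightarrow> complex ^ 'n \<Rightarrow> complex ^ 'n \<Rightarrow> real" where
  "hess f p v w = frechet_derivative (\<lambda>q. frechet_derivative f (at q) v) (at p) w"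

text \<open>Levi form \<open>dd\<^sup>c f (v, \<surd>-1 v)\<close> (with \<open>d\<^sup>c = -df\<circ>J\<close>, i.e. \<open>dd\<^sup>c = 2\<i>\<partial>\<partial>bar\<close>).\<close>
definition levi_form :: "(complex ^ 'n \<Rightarrow> real) \<Rightarrow> complex ^ 'n \<Rightarrow> complex ^ 'n \<Rightarrow> real" where
  "levi_form f p v = hess f p v v + hess f p (Jmul v) (Jmul v)"

definition C2_on :: "(complex ^ 'n) set \<Rightarrow> (complex ^ 'n \<Rightarrow> real) \<Rightarrow> bool" where
  "C2_on U f \<longleftrightarrow>
     (\<forall>p\<in>U. f differentiable (at p)) \<and>
     (\<forall>v. \<forall>p\<in>U. (\<lambda>q. frechet_derivative f (at q) v) differentiable (at p)) \<and>
     (\<forall>v w. continuous_on U (\<lambda>p. hess f p v w))"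

definition weakly_psh_on :: "(complex ^ 'n) set \<Rightarrow> (complex ^ 'n \<Rightarrow> real) \<Rightarrow> bool" where
  "weakly_psh_on U f \<longleftrightarrow> C2_on U f \<and> (\<forall>p\<in>U. \<forall>v. levi_form f p v \<ge> 0)"

definition levi_dominated_on :: "(complex ^ 'n) set \<Rightarrow> (complex ^ 'n \<Rightarrow> real) \<Rightarrow> bool" where
  "levi_dominated_on S f \<longleftrightarrow> (\<exists>C>0. \<forall>p\<in>S. \<forall>v. levi_form f p v \<le> C * (norm v)\<^sup>2)"

definition levi_equiv_euclid_on :: "(complex ^ 'n) set \<Rightarrow> (complex ^ 'n \<Rightarrow> real) \<Rightarrow> bool" where
  "levi_equiv_euclid_on S f \<longleftrightarrow>
     (\<exists>c>0. \<exists>C>0. \<forall>p\<in>S. \<forall>v. c * (norm v)\<^sup>2 \<le> levi_form f p v \<and> levi_form f p v \<le> C * (norm v)\<^sup>2)"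

end

theory Submission
  imports Defs
begin

text \<open>
  The function is built at scale \<open>r = 1\<close> and then dilated, \<open>\<beta>\<^sub>r(z) = r\<^sup>2 \<beta>(z/r)\<close>, which only
  replaces \<open>v\<close> by \<open>v/r\<close> in the Levi form. Let \<open>a = |x|\<^sup>2\<close>, \<open>b = |y|\<^sup>2\<close>, let \<open>c\<close> be the sum of
  \<open>x\<^sub>i y\<^sub>i\<close> over \<open>i > k\<close>, and let \<open>g = profile\<close> be \<open>C\<^sup>3\<close> with \<open>g t = 4t/3\<close> for \<open>t \<le> 1/2\<close> and
  \<open>g t = 1\<close> for \<open>t \<ge> 1\<close>. Then \<open>\<beta> = 3/4 (g(a) g(b) + 2 g'(a) g'(b) c\<^sup>2)\<close> equals \<open>b\<close> where
  \<open>a \<ge> 1 \<ge> 2b\<close> and \<open>a\<close> where \<open>b \<ge> 1 \<ge> 2a\<close>. It is nonnegative, so it vanishes to first order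
  wherever it vanishes, in particular where \<open>a = 0\<close> or \<open>b = 0\<close> (as \<open>c\<^sup>2 \<le> ab\<close>).

  Since \<open>a - b + 2\<i>c = \<Sum>\<^sub>i\<^sub>>\<^sub>k z\<^sub>i\<^sup>2\<close> is holomorphic, the complex derivatives \<open>df(v) + \<i> df(Jv)\<close>
  of \<open>a\<close>, \<open>b\<close>, \<open>c\<close>, say \<open>\<alpha>\<close>, \<open>\<beta>\<close>, \<open>\<gamma>\<close>, satisfy \<open>\<gamma> = \<i>(\<alpha> - \<beta>)/2\<close>. Near \<open>a = 0\<close> the indefinite
  term \<open>2 g'(a) g'(b) Re(\<alpha> \<beta>\<^sup>*)\<close> in the Levi form of \<open>g(a) g(b)\<close> is completed by the term
  \<open>4 g'(a) g'(b) |\<gamma>|\<^sup>2\<close> coming from \<open>c\<^sup>2\<close> to \<open>g'(a) g'(b) (|\<alpha>|\<^sup>2 + |\<beta>|\<^sup>2) \<ge> 0\<close>. The remaining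
  terms vanish where \<open>b \<le> 1/2\<close> and are \<open>O(a + |c|) |v|\<^sup>2\<close>, hence absorbed by \<open>2 g(b) |v|\<^sup>2\<close> once
  \<open>a < D\<^sup>2\<close> with \<open>D = 1/1000\<close>; where moreover \<open>b \<ge> 1\<close>, the Levi form is exactly \<open>2 |v|\<^sup>2\<close>.
  It is bounded everywhere because \<open>|\<alpha>|\<^sup>2 \<le> 4a |v|\<^sup>2\<close> and \<open>|\<beta>|\<^sup>2 \<le> 4b |v|\<^sup>2\<close>.
\<close>

section \<open>Functions with continuous second derivatives\<close>

definition has_C2_derivs ::
    "('a::real_normed_vector \<Rightarrow> real) \<Rightarrow> ('a \<Rightarrow> 'a \<Rightarrow> real) \<Rightarrow> ('a \<Rightarrow> 'a \<Rightarrow> 'a \<Rightarrow> real) \<Rightarrow> bool" where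
  "has_C2_derivs f f' f'' \<longleftrightarrow>
     (\<forall>q. (f has_derivative f' q) (at q)) \<and>
     (\<forall>q v. ((\<lambda>q. f' q v) has_derivative f'' q v) (at q)) \<and>
     (\<forall>v w. continuous_on UNIV (\<lambda>q. f'' q v w))"

lemma has_C2_derivsD:
  assumes "has_C2_derivs f f' f''"
  shows "(f has_derivative f' q) (at q)" "((\<lambda>q. f' q v) has_derivative f'' q v) (at q)"
    "continuous_on UNIV (\<lambda>q. f'' q v w)"
    "isCont f q" "isCont (\<lambda>q. f' q v) q" "isCont (\<lambda>q. f'' q v w) q"
  using assms unfolding has_C2_derivs_def
  by (auto intro: has_derivative_continuous simp: continuous_on_eq_continuous_at)

lemma has_C2_derivs_cong:
  "has_C2_derivs f f' f'' \<Longrightarrow> (\<And>q. f q = g q) \<Longrightarrow> (\<And>q v. f' q v = g' q v) \<Longrightarrow>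
   (\<And>q v w. f'' q v w = g'' q v w) \<Longrightarrow> has_C2_derivs g g' g''"
proof -
  assume "has_C2_derivs f f' f''" "\<And>q. f q = g q" "\<And>q v. f' q v = g' q v" "\<And>q v w. f'' q v w = g'' q v w"
  moreover from this have "f = g" "f' = g'" "f'' = g''" by (auto intro!: ext)
  ultimately show ?thesis by simp
qed

lemma has_C2_derivs_const: "has_C2_derivs (\<lambda>q. c) (\<lambda>q v. 0) (\<lambda>q v w. 0)"
  unfolding has_C2_derivs_def by auto

lemma has_C2_derivs_linear:
  "bounded_linear l \<Longrightarrow> has_C2_derivs l (\<lambda>q. l) (\<lambda>q v w. 0)"
  unfolding has_C2_derivs_def by (auto intro!: bounded_linear_imp_has_derivative)

lemma has_C2_derivs_add:
  assumes "has_C2_derivs f f' f''" "has_C2_derivs g g' g''"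
  shows "has_C2_derivs (\<lambda>q. f q + g q) (\<lambda>q v. f' q v + g' q v) (\<lambda>q v w. f'' q v w + g'' q v w)"
  unfolding has_C2_derivs_def using has_C2_derivsD[OF assms(1)] has_C2_derivsD[OF assms(2)]
  by (auto intro!: derivative_intros continuous_intros)

lemma has_C2_derivs_sum:
  assumes "finite I" "\<And>i. i \<in> I \<Longrightarrow> has_C2_derivs (f i) (f' i) (f'' i)"
  shows "has_C2_derivs (\<lambda>q. \<Sum>i\<in>I. f i q) (\<lambda>q v. \<Sum>i\<in>I. f' i q v) (\<lambda>q v w. \<Sum>i\<in>I. f'' i q v w)"
  using assms
proof (induction I rule: finite_induct)
  case empty
  then show ?case using has_C2_derivs_const[of 0] by simp
next
  case (insert x F)
  then show ?case using has_C2_derivs_add[of "f x" "f' x" "f'' x"] by simp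
qed

lemma has_C2_derivs_mult:
  assumes "has_C2_derivs f f' f''" "has_C2_derivs g g' g''"
  shows "has_C2_derivs (\<lambda>q. f q * g q) (\<lambda>q v. f' q v * g q + f q * g' q v)
     (\<lambda>q v w. f'' q v w * g q + f' q v * g' q w + f' q w * g' q v + f q * g'' q v w)"
proof -
  note F = has_C2_derivsD[OF assms(1)] and G = has_C2_derivsD[OF assms(2)]
  have "((\<lambda>q. f q * g q) has_derivative (\<lambda>v. f' q v * g q + f q * g' q v)) (at q)" for q
    by (rule has_derivative_eq_rhs[OF has_derivative_mult[OF F(1) G(1)]]) (auto simp: fun_eq_iff)
  moreover have "((\<lambda>q. f' q v * g q + f q * g' q v) has_derivative
      (\<lambda>w. f'' q v w * g q + f' q v * g' q w + f' q w * g' q v + f q * g'' q v w)) (at q)" for q v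
    by (rule has_derivative_eq_rhs[OF has_derivative_add[OF
          has_derivative_mult[OF F(2) G(1)] has_derivative_mult[OF F(1) G(2)]]])
      (auto simp: algebra_simps fun_eq_iff)
  moreover have "continuous_on UNIV
      (\<lambda>q. f'' q v w * g q + f' q v * g' q w + f' q w * g' q v + f q * g'' q v w)" for v w
    unfolding continuous_on_eq_continuous_at[OF open_UNIV]
    using F G by (auto intro!: continuous_intros)
  ultimately show ?thesis unfolding has_C2_derivs_def by blast
qed

lemma has_C2_derivs_cmult:
  "has_C2_derivs f f' f'' \<Longrightarrow> has_C2_derivs (\<lambda>q. c * f q) (\<lambda>q v. c * f' q v) (\<lambda>q v w. c * f'' q v w)"
  using has_C2_derivs_mult[OF has_C2_derivs_const[of c]] by (rule has_C2_derivs_cong) auto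

lemma has_C2_derivs_compose:
  assumes "has_C2_derivs f f' f''"
    and "\<And>t. (\<phi> has_real_derivative \<phi>' t) (at t)" "\<And>t. (\<phi>' has_real_derivative \<phi>'' t) (at t)"
    and "continuous_on UNIV \<phi>''"
  shows "has_C2_derivs (\<lambda>q. \<phi> (f q)) (\<lambda>q v. \<phi>' (f q) * f' q v)
     (\<lambda>q v w. \<phi>'' (f q) * f' q w * f' q v + \<phi>' (f q) * f'' q v w)"
proof -
  note F = has_C2_derivsD[OF assms(1)]
  have d\<phi>: "(\<phi> has_derivative (\<lambda>h. \<phi>' t * h)) (at t)" "(\<phi>' has_derivative (\<lambda>h. \<phi>'' t * h)) (at t)" for t
    using assms(2,3)[of t] by (simp_all add: has_field_derivative_def)
  have "((\<lambda>q. \<phi> (f q)) has_derivative (\<lambda>v. \<phi>' (f q) * f' q v)) (at q)" for q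
    using has_derivative_compose[OF F(1) d\<phi>(1)] by simp
  moreover have "((\<lambda>q. \<phi>' (f q) * f' q v) has_derivative
      (\<lambda>w. \<phi>'' (f q) * f' q w * f' q v + \<phi>' (f q) * f'' q v w)) (at q)" for q v
    by (rule has_derivative_eq_rhs[OF has_derivative_mult[OF has_derivative_compose[OF F(1) d\<phi>(2)] F(2)]])
      (auto simp: algebra_simps fun_eq_iff)
  moreover have "continuous_on UNIV (\<lambda>q. \<phi>'' (f q) * f' q w * f' q v + \<phi>' (f q) * f'' q v w)" for v w
  proof -
    have cont: "isCont \<phi>'' t" "isCont \<phi>' t" for t
      using assms(4) DERIV_isCont[OF assms(3)] by (auto simp: continuous_on_eq_continuous_at)
    show ?thesis
      unfolding continuous_on_eq_continuous_at[OF open_UNIV]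
      using F by (auto intro!: continuous_intros isCont_o2[OF _ cont(1)] isCont_o2[OF _ cont(2)])
  qed
  ultimately show ?thesis unfolding has_C2_derivs_def by blast
qed

lemma has_C2_derivs_compose_linear:
  assumes "has_C2_derivs f f' f''" "bounded_linear L"
  shows "has_C2_derivs (\<lambda>q. f (L q)) (\<lambda>q v. f' (L q) (L v)) (\<lambda>q v w. f'' (L q) (L v) (L w))"
proof -
  note F = has_C2_derivsD[OF assms(1)] and dL = bounded_linear_imp_has_derivative[OF assms(2)]
  have "continuous_on UNIV (\<lambda>q. f'' (L q) (L v) (L w))" for v w
    unfolding continuous_on_eq_continuous_at[OF open_UNIV]
    using isCont_o2[OF linear_continuous_at[OF assms(2)] F(6)] by blast
  then show ?thesis
    unfolding has_C2_derivs_def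
    using has_derivative_compose[OF dL F(1)] has_derivative_compose[OF dL F(2)] by auto
qed

lemma has_C2_derivs_linear_product:
  assumes "bounded_linear l" "bounded_linear m"
  shows "has_C2_derivs (\<lambda>q. l q * m q) (\<lambda>q v. l v * m q + l q * m v) (\<lambda>q v w. l v * m w + l w * m v)"
  using has_C2_derivs_mult[OF has_C2_derivs_linear[OF assms(1)] has_C2_derivs_linear[OF assms(2)]]
  by (rule has_C2_derivs_cong) auto

lemma frechet_derivative_eq_C2_deriv:
  "has_C2_derivs f f' f'' \<Longrightarrow> frechet_derivative f (at q) = f' q"
  using has_C2_derivsD(1) frechet_derivative_at by metis

lemma hess_eq_C2_deriv:
  assumes "has_C2_derivs f f' f''"
  shows "hess f p v w = f'' p v w"
proof -
  have "(\<lambda>q. frechet_derivative f (at q) v) = (\<lambda>q. f' q v)"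
    using frechet_derivative_eq_C2_deriv[OF assms] by simp
  then show ?thesis unfolding hess_def using has_C2_derivsD(2)[OF assms] frechet_derivative_at by metis
qed

lemma C2_on_if_has_C2_derivs:
  assumes "has_C2_derivs f f' f''"
  shows "C2_on U f"
proof -
  have f': "(\<lambda>q. frechet_derivative f (at q) v) = (\<lambda>q. f' q v)" for v
    using frechet_derivative_eq_C2_deriv[OF assms] by auto
  have f'': "(\<lambda>p. hess f p v w) = (\<lambda>p. f'' p v w)" for v w
    using hess_eq_C2_deriv[OF assms] by auto
  show ?thesis
    unfolding C2_on_def f' f''
    using has_C2_derivsD[OF assms] continuous_on_subset[OF has_C2_derivsD(3)[OF assms]]
    by (auto simp: differentiable_def)
qed

lemma frechet_derivative_eq_0_at_zero_of_nonneg: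
  assumes "has_C2_derivs f f' f''" "\<And>q. 0 \<le> f q" "f p = 0"
  shows "frechet_derivative f (at p) = (\<lambda>v. 0)"
  unfolding frechet_derivative_eq_C2_deriv[OF assms(1)]
  by (rule has_derivative_local_min[OF has_C2_derivsD(1)[OF assms(1)]]) (simp add: assms(2,3))

lemma has_C2_derivs_sum_squares:
  fixes l :: "'i \<Rightarrow> 'a::real_normed_vector \<Rightarrow> real"
  assumes "finite I" "\<And>i. bounded_linear (l i)"
  shows "has_C2_derivs (\<lambda>q. \<Sum>i\<in>I. (l i q)^2)
    (\<lambda>q v. 2 * (\<Sum>i\<in>I. l i q * l i v)) (\<lambda>q v w. 2 * (\<Sum>i\<in>I. l i v * l i w))"
proof -
  have "has_C2_derivs (\<lambda>q. \<Sum>i\<in>I. l i q * l i q) (\<lambda>q v. \<Sum>i\<in>I. l i v * l i q + l i q * l i v)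
      (\<lambda>q v w. \<Sum>i\<in>I. l i v * l i w + l i w * l i v)"
    using assms by (intro has_C2_derivs_sum has_C2_derivs_linear_product)
  then show ?thesis
    by (rule has_C2_derivs_cong) (simp_all add: power2_eq_square sum_distrib_left algebra_simps)
qed

section \<open>Levi forms on \<open>\<complex>\<^sup>n\<close>\<close>

definition cderiv :: "(complex ^ 'n \<Rightarrow> complex ^ 'n \<Rightarrow> real) \<Rightarrow> complex ^ 'n \<Rightarrow> complex ^ 'n \<Rightarrow> complex" where
  "cderiv f' q v = Complex (f' q v) (f' q (Jmul v))"

definition levi_hess ::
    "(complex ^ 'n \<Rightarrow> complex ^ 'n \<Rightarrow> complex ^ 'n \<Rightarrow> real) \<Rightarrow> complex ^ 'n \<Rightarrow> complex ^ 'n \<Rightarrow> real" where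
  "levi_hess f'' q v = f'' q v v + f'' q (Jmul v) (Jmul v)"

lemma levi_form_eq_levi_hess: "has_C2_derivs f f' f'' \<Longrightarrow> levi_form f p v = levi_hess f'' p v"
  unfolding levi_form_def levi_hess_def by (simp add: hess_eq_C2_deriv)

lemma levi_hess_add:
  "levi_hess (\<lambda>q v w. f'' q v w + g'' q v w) q v = levi_hess f'' q v + levi_hess g'' q v"
  unfolding levi_hess_def by simp

lemma levi_hess_cmult: "levi_hess (\<lambda>q v w. c * f'' q v w) q v = c * levi_hess f'' q v"
  unfolding levi_hess_def by (simp add: algebra_simps)

lemma levi_hess_mult:
  "levi_hess (\<lambda>q v w. f'' q v w * g q + f' q v * g' q w + f' q w * g' q v + f q * g'' q v w) q v
     = levi_hess f'' q v * g q + f q * levi_hess g'' q v + 2 * Re (cderiv f' q v * cnj (cderiv g' q v))"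
  unfolding levi_hess_def cderiv_def by (simp add: algebra_simps)

lemma levi_hess_compose:
  "levi_hess (\<lambda>q v w. \<phi>'' (f q) * f' q w * f' q v + \<phi>' (f q) * f'' q v w) q v
     = \<phi>' (f q) * levi_hess f'' q v + \<phi>'' (f q) * (cmod (cderiv f' q v))^2"
  unfolding levi_hess_def cderiv_def cmod_power2 by (simp add: algebra_simps power2_eq_square)

lemma cderiv_mult:
  "cderiv (\<lambda>q v. f' q v * g q + f q * g' q v) q v = g q * cderiv f' q v + f q * cderiv g' q v"
  unfolding cderiv_def by (simp add: complex_eq_iff)

lemma cderiv_compose: "cderiv (\<lambda>q v. \<phi>' (f q) * f' q v) q v = \<phi>' (f q) * cderiv f' q v"
  unfolding cderiv_def by (simp add: complex_eq_iff)

lemma norm_vec_complex_sq: "(norm (v :: complex ^ 'n::finite))^2 = (\<Sum>i\<in>UNIV. (cmod (v $ i))^2)"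
  unfolding norm_vec_def L2_set_def by (simp add: sum_nonneg)

context
  fixes l :: "'n::finite \<Rightarrow> complex ^ 'n \<Rightarrow> real"
  assumes J_compatible: "\<And>i v. (l i v)^2 + (l i (Jmul v))^2 = (cmod (v $ i))^2"
begin

lemma levi_hess_sum_squares:
  "levi_hess (\<lambda>q v w. 2 * (\<Sum>i\<in>UNIV. l i v * l i w)) q v = 2 * (norm v)^2"
  unfolding levi_hess_def norm_vec_complex_sq J_compatible[symmetric]
  by (simp add: sum.distrib power2_eq_square)

lemma cderiv_sum_squares_bound:
  "(cmod (cderiv (\<lambda>q v. 2 * (\<Sum>i\<in>UNIV. l i q * l i v)) q v))^2 \<le> 4 * (\<Sum>i\<in>UNIV. (l i q)^2) * (norm v)^2"
proof -
  have "(cmod (cderiv (\<lambda>q v. 2 * (\<Sum>i\<in>UNIV. l i q * l i v)) q v))^2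
      = 4 * ((\<Sum>i\<in>UNIV. l i q * l i v)^2 + (\<Sum>i\<in>UNIV. l i q * l i (Jmul v))^2)"
    by (simp add: cderiv_def cmod_power2 power_mult_distrib)
  also have "\<dots> \<le> 4 * ((\<Sum>i\<in>UNIV. (l i q)^2) * (\<Sum>i\<in>UNIV. (l i v)^2) 
      + (\<Sum>i\<in>UNIV. (l i q)^2) * (\<Sum>i\<in>UNIV. (l i (Jmul v))^2))"
    using Cauchy_Schwarz_ineq_sum[of "\<lambda>i. l i q" "\<lambda>i. l i v" UNIV]
      Cauchy_Schwarz_ineq_sum[of "\<lambda>i. l i q" "\<lambda>i. l i (Jmul v)" UNIV] by simp
  also have "\<dots> = 4 * (\<Sum>i\<in>UNIV. (l i q)^2) * (norm v)^2"
    unfolding norm_vec_complex_sq J_compatible[symmetric] by (simp add: sum.distrib algebra_simps)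
  finally show ?thesis .
qed

end

section \<open>The functions \<open>|x|\<^sup>2\<close>, \<open>|y|\<^sup>2\<close> and their cross term\<close>

definition mixed_coord :: "'n set \<Rightarrow> 'n \<Rightarrow> complex ^ 'n \<Rightarrow> real" where
  "mixed_coord F i q = (if i \<in> F then Re (q $ i) else Im (q $ i))"

definition rho_mixed :: "('n::finite) set \<Rightarrow> complex ^ 'n \<Rightarrow> real" where
  "rho_mixed F q = (\<Sum>i\<in>UNIV. (mixed_coord F i q)^2)"

definition cross :: "('n::finite) set \<Rightarrow> complex ^ 'n \<Rightarrow> real" where
  "cross F q = (\<Sum>i\<in>UNIV - F. Re (q $ i) * Im (q $ i))"

definition rho1' :: "complex ^ ('n::finite) \<Rightarrow> complex ^ 'n \<Rightarrow> real" where
  "rho1' q v = 2 * (\<Sum>i\<in>UNIV. Re (q $ i) * Re (v $ i))"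

definition rho_mixed' :: "('n::finite) set \<Rightarrow> complex ^ 'n \<Rightarrow> complex ^ 'n \<Rightarrow> real" where
  "rho_mixed' F q v = 2 * (\<Sum>i\<in>UNIV. mixed_coord F i q * mixed_coord F i v)"

definition cross' :: "('n::finite) set \<Rightarrow> complex ^ 'n \<Rightarrow> complex ^ 'n \<Rightarrow> real" where
  "cross' F q v = (\<Sum>i\<in>UNIV - F. Re (v $ i) * Im (q $ i) + Re (q $ i) * Im (v $ i))"

lemma sum_UNIV_split: "sum f (UNIV :: 'n::finite set) = sum f F + sum f (UNIV - F)"
  by (metis add.commute finite sum.subset_diff top_greatest)

lemma rho2_eq_rho_mixed: "rho2 k = rho_mixed (first_coords k)"
proof
  fix q :: "complex ^ ('n::{finite,linorder})"
  have "rho_mixed (first_coords k) q = (\<Sum>i\<in>first_coords k. (mixed_coord (first_coords k) i q)^2)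
      + (\<Sum>i\<in>UNIV - first_coords k. (mixed_coord (first_coords k) i q)^2)"
    unfolding rho_mixed_def by (rule sum_UNIV_split)
  then show "rho2 k q = rho_mixed (first_coords k) q"
    unfolding rho2_def by (simp add: mixed_coord_def)
qed

lemma bounded_linear_Re_nth: "bounded_linear (\<lambda>q::complex ^ 'n. Re (q $ i))"
  by (rule bounded_linear_compose[OF bounded_linear_Re bounded_linear_vec_nth])

lemma bounded_linear_Im_nth: "bounded_linear (\<lambda>q::complex ^ 'n. Im (q $ i))"
  by (rule bounded_linear_compose[OF bounded_linear_Im bounded_linear_vec_nth])

lemma bounded_linear_mixed_coord: "bounded_linear (mixed_coord F i)"
proof (cases "i \<in> F")
  case True
  then have "mixed_coord F i = (\<lambda>q. Re (q $ i))" by (simp add: fun_eq_iff mixed_coord_def)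
  then show ?thesis by (simp add: bounded_linear_Re_nth)
next
  case False
  then have "mixed_coord F i = (\<lambda>q. Im (q $ i))" by (simp add: fun_eq_iff mixed_coord_def)
  then show ?thesis by (simp add: bounded_linear_Im_nth)
qed

lemma Re_Jmul [simp]: "Re (Jmul v $ i) = - Im (v $ i)" and Im_Jmul [simp]: "Im (Jmul v $ i) = Re (v $ i)"
  by (simp_all add: Jmul_def)

lemma Jmul_scaleR: "Jmul (c *\<^sub>R v) = c *\<^sub>R Jmul v"
  by (simp add: Jmul_def vec_eq_iff)

lemma has_C2_derivs_rho1:
  "has_C2_derivs rho1 rho1' (\<lambda>q v w. 2 * (\<Sum>i\<in>UNIV. Re (v $ i) * Re (w $ i)))"
  using has_C2_derivs_sum_squares[OF finite_class.finite_UNIV bounded_linear_Re_nth]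
  unfolding rho1_def[abs_def] rho1'_def[abs_def] .

lemma has_C2_derivs_rho_mixed:
  "has_C2_derivs (rho_mixed F) (rho_mixed' F) (\<lambda>q v w. 2 * (\<Sum>i\<in>UNIV. mixed_coord F i v * mixed_coord F i w))"
  using has_C2_derivs_sum_squares[OF finite_class.finite_UNIV bounded_linear_mixed_coord]
  unfolding rho_mixed_def[abs_def] rho_mixed'_def[abs_def] .

lemma has_C2_derivs_cross:
  "has_C2_derivs (cross F) (cross' F)
     (\<lambda>q v w. \<Sum>i\<in>UNIV - F. Re (v $ i) * Im (w $ i) + Re (w $ i) * Im (v $ i))"
  unfolding cross_def[abs_def] cross'_def[abs_def]
  by (intro has_C2_derivs_sum has_C2_derivs_linear_product bounded_linear_Re_nth bounded_linear_Im_nth) simp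

lemma levi_hess_rho1: "levi_hess (\<lambda>q v w. 2 * (\<Sum>i\<in>UNIV. Re (v $ i) * Re (w $ i))) q v = 2 * (norm v)^2"
  by (rule levi_hess_sum_squares) (simp add: cmod_power2 add.commute)

lemma levi_hess_rho_mixed:
  "levi_hess (\<lambda>q v w. 2 * (\<Sum>i\<in>UNIV. mixed_coord F i v * mixed_coord F i w)) q v = 2 * (norm v)^2"
  by (rule levi_hess_sum_squares) (simp add: mixed_coord_def cmod_power2 add.commute)

lemma levi_hess_cross:
  "levi_hess (\<lambda>q v w. \<Sum>i\<in>UNIV - F. Re (v $ i) * Im (w $ i) + Re (w $ i) * Im (v $ i)) q v = 0"
  unfolding levi_hess_def by (simp add: sum.distrib[symmetric])

lemma cderiv_rho1_bound: "(cmod (cderiv rho1' q v))^2 \<le> 4 * rho1 q * (norm v)^2"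
  using cderiv_sum_squares_bound[of "\<lambda>i q. Re (q $ i)"]
  unfolding rho1_def rho1'_def[abs_def] by (simp add: cmod_power2 add.commute)

lemma cderiv_rho_mixed_bound: "(cmod (cderiv (rho_mixed' F) q v))^2 \<le> 4 * rho_mixed F q * (norm v)^2"
  using cderiv_sum_squares_bound[of "mixed_coord F"]
  unfolding rho_mixed_def rho_mixed'_def[abs_def] by (simp add: mixed_coord_def cmod_power2 add.commute)

lemma rho1'_minus_rho_mixed':
  "rho1' q v - rho_mixed' F q v = 2 * (\<Sum>i\<in>UNIV - F. Re (q $ i) * Re (v $ i) - Im (q $ i) * Im (v $ i))"
proof -
  have "rho1' q v - rho_mixed' F q v
      = 2 * (\<Sum>i\<in>UNIV. Re (q $ i) * Re (v $ i) - mixed_coord F i q * mixed_coord F i v)"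
    unfolding rho1'_def rho_mixed'_def by (simp add: sum_subtractf algebra_simps)
  also have "\<dots> = 2 * (\<Sum>i\<in>UNIV - F. Re (q $ i) * Re (v $ i) - Im (q $ i) * Im (v $ i))"
    by (subst sum_UNIV_split[of _ F]) (simp add: mixed_coord_def)
  finally show ?thesis .
qed

text \<open>\<open>rho1 - rho_mixed F\<close> and \<open>2 * cross F\<close> are the real and imaginary parts of the holomorphic
  function \<open>\<Sum>i\<notin>F. z\<^sub>i\<^sup>2\<close>; this is the Cauchy-Riemann relation between their differentials.\<close>

lemma cderiv_cross:
  "cderiv (cross' F) q v = \<i> * (cderiv rho1' q v - cderiv (rho_mixed' F) q v) / 2"
proof -
  have "cross' F q v = - (rho1' q (Jmul v) - rho_mixed' F q (Jmul v)) / 2"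
    unfolding rho1'_minus_rho_mixed' cross'_def by (simp add: sum_negf[symmetric] algebra_simps)
  moreover have "cross' F q (Jmul v) = (rho1' q v - rho_mixed' F q v) / 2"
    unfolding rho1'_minus_rho_mixed' cross'_def by (simp add: algebra_simps)
  ultimately show ?thesis
    by (simp add: complex_eq_iff cderiv_def)
qed

lemma rho1_nonneg: "0 \<le> rho1 q"
  unfolding rho1_def by (simp add: sum_nonneg)

lemma rho_mixed_nonneg: "0 \<le> rho_mixed F q"
  unfolding rho_mixed_def by (simp add: sum_nonneg)

lemma cross_sq_le: "(cross F q)^2 \<le> rho1 q * rho_mixed F q"
proof -
  have "(cross F q)^2 \<le> (\<Sum>i\<in>UNIV - F. (Re (q $ i))^2) * (\<Sum>i\<in>UNIV - F. (Im (q $ i))^2)"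
    unfolding cross_def by (rule Cauchy_Schwarz_ineq_sum)
  also have "\<dots> \<le> rho1 q * rho_mixed F q"
  proof (rule mult_mono)
    show "(\<Sum>i\<in>UNIV - F. (Re (q $ i))^2) \<le> rho1 q"
      unfolding rho1_def by (rule sum_mono2) auto
    show "(\<Sum>i\<in>UNIV - F. (Im (q $ i))^2) \<le> rho_mixed F q"
      unfolding rho_mixed_def by (rule order_trans[OF _ sum_mono2[of UNIV "UNIV - F"]]) (auto simp: mixed_coord_def)
  qed (auto simp: sum_nonneg rho1_nonneg)
  finally show ?thesis .
qed

lemma rho1_scaleR: "rho1 (c *\<^sub>R q) = c^2 * rho1 q"
  unfolding rho1_def by (simp add: sum_distrib_left power_mult_distrib)

lemma rho_mixed_scaleR: "rho_mixed F (c *\<^sub>R q) = c^2 * rho_mixed F q"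
  unfolding rho_mixed_def mixed_coord_def
  by (auto simp: sum_distrib_left power_mult_distrib intro!: sum.cong)

section \<open>The profile function\<close>

definition tpow :: "nat \<Rightarrow> real \<Rightarrow> real" where
  "tpow n x = (max 0 x) ^ n"

lemma tpow_has_real_derivative_at_zero:
  "(tpow (Suc (Suc m)) has_real_derivative 0) (at 0)"
proof -
  have "((\<lambda>h. tpow (Suc (Suc m)) h / h) \<longlongrightarrow> 0) (at 0)"
  proof (rule Lim_null_comparison)
    show "\<forall>\<^sub>F h in at 0. norm (tpow (Suc (Suc m)) h / h) \<le> \<bar>h\<bar> ^ Suc m"
    proof (intro always_eventually allI)
      fix h :: real
      show "norm (tpow (Suc (Suc m)) h / h) \<le> \<bar>h\<bar> ^ Suc m"
      proof (cases "h > 0")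
        case False
        then have "tpow (Suc (Suc m)) h = 0" by (simp add: tpow_def)
        then show ?thesis by simp
      qed (simp add: tpow_def field_simps)
    qed
    show "((\<lambda>h. \<bar>h\<bar> ^ Suc m) \<longlongrightarrow> 0) (at (0::real))"
      by (rule tendsto_eq_intros refl | simp)+
  qed
  then show ?thesis
    by (simp add: DERIV_def tpow_def)
qed

lemma tpow_has_real_derivative:
  "(tpow (Suc (Suc m)) has_real_derivative real (Suc (Suc m)) * tpow (Suc m) x) (at x)"
proof -
  consider "x < 0" | "x > 0" | "x = 0" by linarith
  then show ?thesis
  proof cases
    case 1
    have ev: "\<forall>\<^sub>F y in nhds x. tpow (Suc (Suc m)) y = 0"
      using eventually_nhds_in_open[of "{..<0}" x] 1 by (auto elim!: eventually_mono simp: tpow_def)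
    have "((\<lambda>y. 0) has_real_derivative 0) (at x)" by simp
    then show ?thesis
      using 1 by (subst DERIV_cong_ev[OF refl ev]) (auto simp: tpow_def)
  next
    case 2
    have "\<forall>\<^sub>F y in nhds x. tpow (Suc (Suc m)) y = y ^ Suc (Suc m)"
      using eventually_nhds_in_open[of "{0<..}" x] 2 by (auto elim!: eventually_mono simp: tpow_def)
    moreover have "((\<lambda>y. y ^ Suc (Suc m)) has_real_derivative real (Suc (Suc m)) * x ^ Suc m) (at x)"
      using DERIV_pow[of "Suc (Suc m)" x] by simp
    ultimately show ?thesis
      using 2 by (subst DERIV_cong_ev[OF refl]) (auto simp: tpow_def)
  next
    case 3
    then show ?thesis using tpow_has_real_derivative_at_zero by (simp add: tpow_def)
  qed
qed

lemma tpow_has_real_derivative_chain [derivative_intros]: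
  assumes "(f has_real_derivative f') (at x within s)" "2 \<le> n"
  shows "((\<lambda>x. tpow n (f x)) has_real_derivative real n * tpow (n - 1) (f x) * f') (at x within s)"
proof -
  obtain m where "n = Suc (Suc m)" using assms(2) by (metis add_2_eq_Suc le_Suc_ex)
  then show ?thesis using DERIV_chain2[OF tpow_has_real_derivative assms(1)] by simp
qed

lemma continuous_on_tpow [continuous_intros]:
  "continuous_on S f \<Longrightarrow> continuous_on S (\<lambda>x. tpow n (f x))"
  unfolding tpow_def by (intro continuous_intros)

text \<open>On \<open>[0, 1]\<close>, \<open>smoothstep\<close> is the quintic \<open>10u\<^sup>3 - 15u\<^sup>4 + 6u\<^sup>5\<close>. The terms in \<open>u - 1\<close> are
  the expansion of this quintic minus \<open>1\<close> in powers of \<open>u - 1\<close> (it has a triple zero at \<open>1\<close>),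
  so \<open>smoothstep\<close> is constantly \<open>1\<close> for \<open>u \<ge> 1\<close>.\<close>

definition smoothstep_int :: "real \<Rightarrow> real" where
  "smoothstep_int u = 5/2 * tpow 4 u - 3 * tpow 5 u + tpow 6 u
     - 5/2 * tpow 4 (u - 1) - 3 * tpow 5 (u - 1) - tpow 6 (u - 1)"

definition smoothstep :: "real \<Rightarrow> real" where
  "smoothstep u = 10 * tpow 3 u - 15 * tpow 4 u + 6 * tpow 5 u
     - 10 * tpow 3 (u - 1) - 15 * tpow 4 (u - 1) - 6 * tpow 5 (u - 1)"

definition smoothstep' :: "real \<Rightarrow> real" where
  "smoothstep' u = 30 * tpow 2 u - 60 * tpow 3 u + 30 * tpow 4 u
     - 30 * tpow 2 (u - 1) - 60 * tpow 3 (u - 1) - 30 * tpow 4 (u - 1)"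

definition smoothstep'' :: "real \<Rightarrow> real" where
  "smoothstep'' u = 60 * tpow 1 u - 180 * tpow 2 u + 120 * tpow 3 u
     - 60 * tpow 1 (u - 1) - 180 * tpow 2 (u - 1) - 120 * tpow 3 (u - 1)"

definition profile :: "real \<Rightarrow> real" where
  "profile t = 4/3 * (t - smoothstep_int (2 * t - 1) / 2)"

definition profile' :: "real \<Rightarrow> real" where
  "profile' t = 4/3 * (1 - smoothstep (2 * t - 1))"

definition profile'' :: "real \<Rightarrow> real" where
  "profile'' t = - 8/3 * smoothstep' (2 * t - 1)"

definition profile''' :: "real \<Rightarrow> real" where
  "profile''' t = - 16/3 * smoothstep'' (2 * t - 1)"

lemma profile_has_real_derivative: "(profile has_real_derivative profile' t) (at t)"
  unfolding profile_def profile'_def smoothstep_int_def smoothstep_def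
  by (rule derivative_eq_intros refl | simp)+ (simp add: field_simps)

lemma profile'_has_real_derivative: "(profile' has_real_derivative profile'' t) (at t)"
  unfolding profile'_def profile''_def smoothstep_def smoothstep'_def
  by (rule derivative_eq_intros refl | simp)+ (simp add: field_simps)

lemma profile''_has_real_derivative: "(profile'' has_real_derivative profile''' t) (at t)"
  unfolding profile''_def profile'''_def smoothstep'_def smoothstep''_def
  by (rule derivative_eq_intros refl | simp)+

lemma continuous_on_profile''': "continuous_on UNIV profile'''"
  unfolding profile'''_def smoothstep''_def by (intro continuous_intros)

lemma continuous_on_profile'': "continuous_on UNIV profile''"
  using profile''_has_real_derivative DERIV_isCont continuous_at_imp_continuous_on by blast

lemma profile_below_half:
  assumes "t \<le> 1/2"
  shows "profile t = 4/3 * t" "profile' t = 4/3" "profile'' t = 0" "profile''' t = 0"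
proof -
  have "max 0 (2*t - 1) = 0" "max 0 (2*t - 1 - 1) = 0" using assms by auto
  then show "profile t = 4/3 * t" "profile' t = 4/3" "profile'' t = 0" "profile''' t = 0"
    unfolding profile_def profile'_def profile''_def profile'''_def tpow_def
      smoothstep_int_def smoothstep_def smoothstep'_def smoothstep''_def
    by simp_all
qed

lemma profile_above_one:
  assumes "1 \<le> t"
  shows "profile t = 1" "profile' t = 0" "profile'' t = 0" "profile''' t = 0"
proof -
  have "max 0 (2*t - 1) = 2*t - 1" "max 0 (2*t - 1 - 1) = 2*t - 2" using assms by auto
  then show "profile t = 1" "profile' t = 0" "profile'' t = 0" "profile''' t = 0"
    unfolding profile_def profile'_def profile''_def profile'''_def tpow_def
      smoothstep_int_def smoothstep_def smoothstep'_def smoothstep''_def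
    by (simp_all add: field_simps power2_eq_square power3_eq_cube power4_eq_xxxx power_def)
qed

lemma profile_between:
  assumes "1/2 \<le> t" "t \<le> 1"
  obtains u where "0 \<le> u * (1 - u)" "u * (1 - u) \<le> 1/4" "\<bar>1 - 2 * u\<bar> \<le> 1"
    "profile'' t = - 80 * (u * (1 - u))^2" "profile''' t = - 320 * (u * (1 - u)) * (1 - 2 * u)"
proof
  define u where "u = 2 * t - 1"
  have u: "0 \<le> u" "u \<le> 1" using assms by (auto simp: u_def)
  have "max 0 (2*t - 1) = u" "max 0 (2*t - 1 - 1) = 0" using u by (auto simp: u_def)
  then show "profile'' t = - 80 * (u * (1 - u))^2" "profile''' t = - 320 * (u * (1 - u)) * (1 - 2 * u)"
    unfolding profile''_def profile'''_def tpow_def smoothstep'_def smoothstep''_def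
    by (simp_all add: algebra_simps power2_eq_square power3_eq_cube power4_eq_xxxx)
  have "\<bar>u - 1/2\<bar> \<le> \<bar>1/2\<bar>" unfolding abs_le_iff using u by simp
  then have "(u - 1/2)^2 \<le> (1/2)^2" by (simp only: abs_le_square_iff)
  moreover have "u * (1 - u) = 1/4 - (u - 1/2)^2" by (simp add: algebra_simps power2_eq_square)
  ultimately show "0 \<le> u * (1 - u)" "u * (1 - u) \<le> 1/4" "\<bar>1 - 2 * u\<bar> \<le> 1"
    using u by (auto simp: power_divide)
qed

lemma profile''_bounds: "profile'' t \<le> 0" "\<bar>profile'' t\<bar> \<le> 5" "0 \<le> t \<Longrightarrow> t * \<bar>profile'' t\<bar> \<le> 5"
proof -
  have "profile'' t \<le> 0 \<and> \<bar>profile'' t\<bar> \<le> 5 \<and> (0 \<le> t \<longrightarrow> t * \<bar>profile'' t\<bar> \<le> 5)"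
  proof (cases "1/2 \<le> t \<and> t \<le> 1")
    case True
    then obtain u where u: "0 \<le> u * (1 - u)" "u * (1 - u) \<le> 1/4" "profile'' t = - 80 * (u * (1 - u))^2"
      by (blast elim: profile_between)
    have "(u * (1 - u))^2 \<le> (1/4)^2" using u by (intro power_mono) auto
    then have "(u * (1 - u))^2 \<le> 1/16" by (simp add: power_divide)
    moreover have "\<bar>profile'' t\<bar> = 80 * (u * (1 - u))^2" using u(3) by simp
    ultimately have "\<bar>profile'' t\<bar> \<le> 5" by linarith
    moreover from this have "t * \<bar>profile'' t\<bar> \<le> 1 * 5" using True by (intro mult_mono) auto
    ultimately show ?thesis using u by simp
  qed (auto simp: profile_below_half profile_above_one)
  then show "profile'' t \<le> 0" "\<bar>profile'' t\<bar> \<le> 5" "0 \<le> t \<Longrightarrow> t * \<bar>profile'' t\<bar> \<le> 5"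
    by auto
qed

lemma profile'''_bound: "\<bar>profile''' t\<bar> \<le> 80"
proof (cases "1/2 \<le> t \<and> t \<le> 1")
  case True
  then obtain u where u: "0 \<le> u * (1 - u)" "u * (1 - u) \<le> 1/4" "\<bar>1 - 2 * u\<bar> \<le> 1"
    and eq: "profile''' t = - 320 * (u * (1 - u)) * (1 - 2 * u)"
    by (blast elim: profile_between)
  have "\<bar>u * (1 - u) * (1 - 2 * u)\<bar> \<le> 1/4 * 1"
    unfolding abs_mult using u by (intro mult_mono) auto
  then show ?thesis unfolding eq by (simp add: abs_mult)
qed (auto simp: profile_below_half profile_above_one)

lemma profile'_bounds: "0 \<le> profile' t" "profile' t \<le> 4/3"
proof -
  have antimono: "profile' y \<le> profile' x" if "x \<le> y" for x y
    using DERIV_nonpos_imp_nonincreasing[OF that] profile'_has_real_derivative profile''_bounds(1)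
    by blast
  show "0 \<le> profile' t"
    using antimono[of t "max 1 t"] profile_above_one[of "max 1 t"] by simp
  show "profile' t \<le> 4/3"
    using antimono[of "min (1/2) t" t] profile_below_half[of "min (1/2) t"] by simp
qed

lemma profile_mono: "s \<le> t \<Longrightarrow> profile s \<le> profile t"
  using DERIV_nonneg_imp_nondecreasing[of s t profile] profile_has_real_derivative profile'_bounds(1)
  by blast

lemma profile_bounds: "0 \<le> t \<Longrightarrow> 0 \<le> profile t" "profile t \<le> 1" "1/2 \<le> t \<Longrightarrow> 2/3 \<le> profile t"
  using profile_mono[of 0 t] profile_mono[of t "max 1 t"] profile_mono[of "1/2" t]
    profile_below_half[of 0] profile_below_half[of "1/2"] profile_above_one[of "max 1 t"]
  by auto

section \<open>The Levi form of the model function\<close>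

text \<open>The Levi form of \<open>beta0\<close> (see \<open>levi_form_beta0\<close>) in terms of the values \<open>a\<close>, \<open>b\<close>, \<open>c\<close> of
  \<open>rho1\<close>, \<open>rho_mixed F\<close>, \<open>cross F\<close>, the complex derivatives \<open>\<alpha>\<close>, \<open>\<beta>\<close> of \<open>a\<close>, \<open>b\<close>, and
  \<open>\<nu> = |v|\<^sup>2\<close>. \<open>LX\<close>, \<open>LY\<close>, \<open>LZ\<close> are the Levi forms of \<open>g(a) g(b)\<close>, \<open>g'(a) g'(b)\<close> and
  \<open>g'(a) g'(b) c\<^sup>2\<close>.\<close>

definition beta_levi :: "real \<Rightarrow> real \<Rightarrow> real \<Rightarrow> complex \<Rightarrow> complex \<Rightarrow> real \<Rightarrow> real" where
  "beta_levi a b c \<alpha> \<beta> \<nu> =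
    (let \<gamma> = \<i> * (\<alpha> - \<beta>) / 2;
         LX = profile a * (profile' b * 2 * \<nu> + profile'' b * (cmod \<beta>)^2)
            + profile b * (profile' a * 2 * \<nu> + profile'' a * (cmod \<alpha>)^2)
            + 2 * profile' a * profile' b * Re (\<alpha> * cnj \<beta>);
         LY = profile' a * (profile'' b * 2 * \<nu> + profile''' b * (cmod \<beta>)^2)
            + profile' b * (profile'' a * 2 * \<nu> + profile''' a * (cmod \<alpha>)^2)
            + 2 * profile'' a * profile'' b * Re (\<alpha> * cnj \<beta>);
         LZ = profile' a * profile' b * 2 * (cmod \<gamma>)^2 + c^2 * LY
            + 4 * c * (profile'' a * profile' b * Re (\<alpha> * cnj \<gamma>) + profile' a * profile'' b * Re (\<beta> * cnj \<gamma>))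
     in 3/4 * (LX + 2 * LZ))"

lemma cmod_gamma: "cmod (\<i> * (\<alpha> - \<beta>) / 2) = cmod (\<alpha> - \<beta>) / 2"
  by (simp add: norm_mult norm_divide)

lemma beta_levi_swap: "beta_levi a b c \<alpha> \<beta> \<nu> = beta_levi b a (- c) \<beta> \<alpha> \<nu>"
  unfolding beta_levi_def Let_def cmod_gamma by (simp add: norm_minus_commute algebra_simps)

lemma beta_levi_below_half:
  assumes "a \<le> 1/2"
  shows "beta_levi a b c \<alpha> \<beta> \<nu> =
    2 * profile b * \<nu> + 2 * a * profile' b * \<nu> + profile' b * ((cmod \<alpha>)^2 + (cmod \<beta>)^2)
    + a * profile'' b * (cmod \<beta>)^2 + 4 * c^2 * profile'' b * \<nu> + 2 * c^2 * profile''' b * (cmod \<beta>)^2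
    + 8 * c * profile'' b * Re (\<beta> * cnj (\<i> * (\<alpha> - \<beta>) / 2))"
  unfolding beta_levi_def Let_def profile_below_half[OF assms] cmod_gamma power_divide cmod_power2
  by (simp add: power2_eq_square field_simps)

lemma beta_levi_below_half_above_one:
  "a \<le> 1/2 \<Longrightarrow> 1 \<le> b \<Longrightarrow> beta_levi a b c \<alpha> \<beta> \<nu> = 2 * \<nu>"
  by (simp add: beta_levi_below_half profile_above_one)

lemma beta_levi_above_one:
  "1 \<le> a \<Longrightarrow> beta_levi a b c \<alpha> \<beta> \<nu> = 3/4 * (profile' b * 2 * \<nu> + profile'' b * (cmod \<beta>)^2)"
  unfolding beta_levi_def Let_def by (simp add: profile_above_one)

lemma abs_mult_le_mono: "\<bar>x\<bar> \<le> X \<Longrightarrow> \<bar>y\<bar> \<le> Y \<Longrightarrow> \<bar>x * y\<bar> \<le> X * (Y::real)"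
  by (simp add: abs_mult mult_mono' order_trans[OF abs_ge_zero])

lemma abs_add_le_mono: "\<bar>x\<bar> \<le> X \<Longrightarrow> \<bar>y\<bar> \<le> Y \<Longrightarrow> \<bar>x + y\<bar> \<le> X + (Y::real)"
  using abs_triangle_ineq[of x y] by linarith

lemma abs_Re_mult_cnj_le: "2 * \<bar>Re (x * cnj y)\<bar> \<le> (cmod x)^2 + (cmod y)^2"
proof -
  have "\<bar>Re (x * cnj y)\<bar> \<le> cmod x * cmod y"
    using abs_Re_le_cmod[of "x * cnj y"] by (simp add: norm_mult)
  then show ?thesis using sum_squares_bound[of "cmod x" "cmod y"] by linarith
qed

lemma cmod_diff_sq_le: "(cmod (x - y))^2 \<le> 2 * ((cmod x)^2 + (cmod y)^2)"
proof -
  have "(cmod (x - y))^2 + (cmod (x + y))^2 = 2 * ((cmod x)^2 + (cmod y)^2)"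
    unfolding cmod_power2 by (simp add: power2_eq_square algebra_simps)
  then show ?thesis using zero_le_power2[of "cmod (x + y)"] by linarith
qed

lemma Re_mult_cnj_bounds:
  assumes "(cmod \<alpha>)^2 \<le> 4 * \<nu>" "(cmod \<beta>)^2 \<le> 4 * \<nu>"
  defines "\<gamma> \<equiv> \<i> * (\<alpha> - \<beta>) / 2"
  shows "(cmod \<gamma>)^2 \<le> 4 * \<nu>" "\<bar>Re (\<alpha> * cnj \<beta>)\<bar> \<le> 4 * \<nu>"
    "\<bar>Re (\<alpha> * cnj \<gamma>)\<bar> \<le> 4 * \<nu>" "\<bar>Re (\<beta> * cnj \<gamma>)\<bar> \<le> 4 * \<nu>"
proof -
  show \<gamma>: "(cmod \<gamma>)^2 \<le> 4 * \<nu>"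
    using cmod_diff_sq_le[of \<alpha> \<beta>] assms(1,2) unfolding \<gamma>_def cmod_gamma power_divide by simp
  show "\<bar>Re (\<alpha> * cnj \<beta>)\<bar> \<le> 4 * \<nu>" "\<bar>Re (\<alpha> * cnj \<gamma>)\<bar> \<le> 4 * \<nu>" "\<bar>Re (\<beta> * cnj \<gamma>)\<bar> \<le> 4 * \<nu>"
    using abs_Re_mult_cnj_le[of \<alpha> \<beta>] abs_Re_mult_cnj_le[of \<alpha> \<gamma>] abs_Re_mult_cnj_le[of \<beta> \<gamma>] assms(1,2) \<gamma>
    by linarith+
qed

lemma beta_levi_error_le:
  assumes a: "0 \<le> a" "a < 1/1000000" and c: "c^2 \<le> a" and \<nu>: "0 \<le> \<nu>"
    and \<alpha>\<beta>: "(cmod \<alpha>)^2 \<le> 4 * \<nu>" "(cmod \<beta>)^2 \<le> 4 * \<nu>"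
  shows "\<bar>a * profile'' b * (cmod \<beta>)^2 + 4 * c^2 * profile'' b * \<nu> + 2 * c^2 * profile''' b * (cmod \<beta>)^2
    + 8 * c * profile'' b * Re (\<beta> * cnj (\<i> * (\<alpha> - \<beta>) / 2))\<bar> \<le> \<nu>"
proof -
  have "c^2 \<le> (1/1000)^2" using c a by (simp add: power2_eq_square)
  then have c1: "\<bar>c\<bar> \<le> 1/1000" using abs_le_square_iff[of c "1/1000"] by simp
  have e1: "\<bar>a * profile'' b * (cmod \<beta>)^2\<bar> \<le> (a * 5) * (4 * \<nu>)"
    using a \<alpha>\<beta> profile''_bounds(2) by (intro abs_mult_le_mono) auto
  have e2: "\<bar>4 * c^2 * profile'' b * \<nu>\<bar> \<le> ((4 * a) * 5) * \<nu>"
    using c \<nu> profile''_bounds(2) by (intro abs_mult_le_mono) auto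
  have e3: "\<bar>2 * c^2 * profile''' b * (cmod \<beta>)^2\<bar> \<le> ((2 * a) * 80) * (4 * \<nu>)"
    using c \<alpha>\<beta> profile'''_bound by (intro abs_mult_le_mono) auto
  have e4: "\<bar>8 * c * profile'' b * Re (\<beta> * cnj (\<i> * (\<alpha> - \<beta>) / 2))\<bar> \<le> ((8 * (1/1000)) * 5) * (4 * \<nu>)"
    using c1 Re_mult_cnj_bounds(4)[OF \<alpha>\<beta>] profile''_bounds(2) by (intro abs_mult_le_mono) auto
  have "a * \<nu> \<le> 1/1000000 * \<nu>" using a \<nu> by (intro mult_right_mono) auto
  then show ?thesis
    using abs_add_le_mono[OF abs_add_le_mono[OF abs_add_le_mono[OF e1 e2] e3] e4] \<nu> by linarith
qed

lemma beta_levi_nonneg: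
  assumes a: "0 \<le> a" "a < 1/1000000" and b: "0 \<le> b" and c: "c^2 \<le> a * b" and \<nu>: "0 \<le> \<nu>"
    and \<alpha>: "(cmod \<alpha>)^2 \<le> 4 * a * \<nu>" and \<beta>: "(cmod \<beta>)^2 \<le> 4 * b * \<nu>"
  shows "0 \<le> beta_levi a b c \<alpha> \<beta> \<nu>"
proof -
  define E where "E = a * profile'' b * (cmod \<beta>)^2 + 4 * c^2 * profile'' b * \<nu>
    + 2 * c^2 * profile''' b * (cmod \<beta>)^2 + 8 * c * profile'' b * Re (\<beta> * cnj (\<i> * (\<alpha> - \<beta>) / 2))"
  have split: "beta_levi a b c \<alpha> \<beta> \<nu> =
      2 * profile b * \<nu> + (2 * a * profile' b * \<nu> + profile' b * ((cmod \<alpha>)^2 + (cmod \<beta>)^2)) + E"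
    using a by (simp add: beta_levi_below_half E_def)
  have P: "0 \<le> 2 * a * profile' b * \<nu> + profile' b * ((cmod \<alpha>)^2 + (cmod \<beta>)^2)"
    using profile'_bounds(1)[of b] a \<nu> by simp
  consider "b \<le> 1/2" | "1 \<le> b" | "1/2 \<le> b" "b \<le> 1" by linarith
  then show ?thesis
  proof cases
    case 1
    then show ?thesis using split P profile_bounds(1)[OF b] \<nu> by (simp add: E_def profile_below_half)
  next
    case 2
    then show ?thesis using a \<nu> by (simp add: beta_levi_below_half_above_one)
  next
    case 3
    have "a * \<nu> \<le> 1 * \<nu>" "b * \<nu> \<le> 1 * \<nu>" using a 3 \<nu> by (intro mult_right_mono; simp)+
    then have \<alpha>\<beta>: "(cmod \<alpha>)^2 \<le> 4 * \<nu>" "(cmod \<beta>)^2 \<le> 4 * \<nu>" using \<alpha> \<beta> by linarith+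
    have "a * b \<le> a * 1" using 3 a by (intro mult_left_mono) auto
    then have "\<bar>E\<bar> \<le> \<nu>" unfolding E_def using c by (intro beta_levi_error_le[OF a _ \<nu> \<alpha>\<beta>]) simp
    moreover have "2/3 * \<nu> \<le> profile b * \<nu>"
      using profile_bounds(3)[of b] 3 \<nu> by (intro mult_right_mono) auto
    ultimately show ?thesis using split P by linarith
  qed
qed

lemma beta_levi_bounded:
  assumes a: "0 \<le> a" and b: "0 \<le> b" and c: "\<bar>c\<bar> \<le> 1" and \<nu>: "0 \<le> \<nu>"
    and \<alpha>: "(cmod \<alpha>)^2 \<le> 4 * \<nu>" and \<beta>: "(cmod \<beta>)^2 \<le> 4 * \<nu>"
  shows "\<bar>beta_levi a b c \<alpha> \<beta> \<nu>\<bar> \<le> 2250 * \<nu>"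
proof -
  define \<gamma> where "\<gamma> = \<i> * (\<alpha> - \<beta>) / 2"
  define LX where "LX = profile a * (profile' b * 2 * \<nu> + profile'' b * (cmod \<beta>)^2)
    + profile b * (profile' a * 2 * \<nu> + profile'' a * (cmod \<alpha>)^2)
    + 2 * profile' a * profile' b * Re (\<alpha> * cnj \<beta>)"
  define LY where "LY = profile' a * (profile'' b * 2 * \<nu> + profile''' b * (cmod \<beta>)^2)
    + profile' b * (profile'' a * 2 * \<nu> + profile''' a * (cmod \<alpha>)^2)
    + 2 * profile'' a * profile'' b * Re (\<alpha> * cnj \<beta>)"
  define LZ where "LZ = profile' a * profile' b * 2 * (cmod \<gamma>)^2 + c^2 * LY
    + 4 * c * (profile'' a * profile' b * Re (\<alpha> * cnj \<gamma>) + profile' a * profile'' b * Re (\<beta> * cnj \<gamma>))"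
  have eq: "beta_levi a b c \<alpha> \<beta> \<nu> = 3/4 * (LX + 2 * LZ)"
    unfolding beta_levi_def Let_def LX_def LY_def LZ_def \<gamma>_def ..
  have g0: "\<bar>profile a\<bar> \<le> 1" "\<bar>profile b\<bar> \<le> 1" using profile_bounds(1,2) a b by auto
  have g1: "\<bar>profile' a\<bar> \<le> 4/3" "\<bar>profile' b\<bar> \<le> 4/3" using profile'_bounds by auto
  note g2 = profile''_bounds(2)[of a] profile''_bounds(2)[of b]
  note g3 = profile'''_bound[of a] profile'''_bound[of b]
  have q: "\<bar>(cmod \<alpha>)^2\<bar> \<le> 4 * \<nu>" "\<bar>(cmod \<beta>)^2\<bar> \<le> 4 * \<nu>" "\<bar>(cmod \<gamma>)^2\<bar> \<le> 4 * \<nu>"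
    using \<alpha> \<beta> Re_mult_cnj_bounds(1)[OF \<alpha> \<beta>] by (simp_all add: \<gamma>_def)
  note p = Re_mult_cnj_bounds(2-4)[OF \<alpha> \<beta>, folded \<gamma>_def]
  have n: "\<bar>\<nu>\<bar> \<le> \<nu>" "\<bar>2::real\<bar> \<le> 2" "\<bar>4::real\<bar> \<le> 4" "\<bar>c^2\<bar> \<le> 1"
    using \<nu> c by (simp_all add: abs_le_square_iff[of c 1, simplified])
  note bounds = abs_mult_le_mono abs_add_le_mono g0 g1 g2 g3 q p n c
  have "\<bar>LX\<bar> \<le> 1 * (4/3 * 2 * \<nu> + 5 * (4 * \<nu>)) + 1 * (4/3 * 2 * \<nu> + 5 * (4 * \<nu>))
      + 2 * (4/3) * (4/3) * (4 * \<nu>)"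
    unfolding LX_def by (intro bounds)
  also have "\<dots> \<le> 60 * \<nu>" using \<nu> by simp
  finally have LX: "\<bar>LX\<bar> \<le> 60 * \<nu>" .
  have "\<bar>LY\<bar> \<le> 4/3 * (5 * 2 * \<nu> + 80 * (4 * \<nu>)) + 4/3 * (5 * 2 * \<nu> + 80 * (4 * \<nu>))
      + 2 * 5 * 5 * (4 * \<nu>)"
    unfolding LY_def by (intro bounds)
  also have "\<dots> = 1080 * \<nu>" by simp
  finally have LY: "\<bar>LY\<bar> \<le> 1080 * \<nu>" .
  have "\<bar>LZ\<bar> \<le> 4/3 * (4/3) * 2 * (4 * \<nu>) + 1 * (1080 * \<nu>)
      + 4 * 1 * (5 * (4/3) * (4 * \<nu>) + 4/3 * 5 * (4 * \<nu>))"
    unfolding LZ_def by (intro bounds LY)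
  also have "\<dots> \<le> 1308 * \<nu>" using \<nu> by simp
  finally have LZ: "\<bar>LZ\<bar> \<le> 1308 * \<nu>" .
  have "\<bar>beta_levi a b c \<alpha> \<beta> \<nu>\<bar> \<le> 3/4 * \<bar>LX\<bar> + 3/2 * \<bar>LZ\<bar>"
    unfolding eq using abs_triangle_ineq[of LX "2 * LZ"] by (simp add: abs_mult)
  then show ?thesis using LX LZ by linarith
qed

lemma beta_levi_above_one_le:
  assumes "1 \<le> a" "0 \<le> b" "0 \<le> \<nu>" "(cmod \<beta>)^2 \<le> 4 * b * \<nu>"
  shows "beta_levi a b c \<alpha> \<beta> \<nu> \<le> 2250 * \<nu>"
proof -
  have "profile'' b * (cmod \<beta>)^2 \<le> \<bar>profile'' b\<bar> * (cmod \<beta>)^2"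
    by (simp add: mult_right_mono)
  also have "\<dots> \<le> \<bar>profile'' b\<bar> * (4 * b * \<nu>)"
    using assms(4) by (simp add: mult_left_mono)
  also have "\<dots> = 4 * \<nu> * (b * \<bar>profile'' b\<bar>)" by simp
  also have "\<dots> \<le> 4 * \<nu> * 5" using profile''_bounds(3)[OF assms(2)] assms(3) by (intro mult_left_mono) auto
  finally have B: "profile'' b * (cmod \<beta>)^2 \<le> 20 * \<nu>" by simp
  have A: "profile' b * 2 * \<nu> \<le> 4/3 * 2 * \<nu>"
    using profile'_bounds(2)[of b] assms(3) by (intro mult_right_mono) auto
  have "beta_levi a b c \<alpha> \<beta> \<nu> \<le> 3/4 * (4/3 * 2 * \<nu> + 20 * \<nu>)"
    unfolding beta_levi_above_one[OF assms(1)] by (rule mult_left_mono[OF add_mono[OF A B]]) simp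
  also have "\<dots> \<le> 2250 * \<nu>" using assms(3) by simp
  finally show ?thesis .
qed

lemma beta_levi_le:
  assumes a: "0 \<le> a" and b: "0 \<le> b" and c: "c^2 \<le> a * b" and \<nu>: "0 \<le> \<nu>"
    and \<alpha>: "(cmod \<alpha>)^2 \<le> 4 * a * \<nu>" and \<beta>: "(cmod \<beta>)^2 \<le> 4 * b * \<nu>"
  shows "beta_levi a b c \<alpha> \<beta> \<nu> \<le> 2250 * \<nu>"
proof -
  consider "1 \<le> a" | "1 \<le> b" | "a < 1" "b < 1" by linarith
  then show ?thesis
  proof cases
    case 1
    then show ?thesis using beta_levi_above_one_le b \<nu> \<beta> by blast
  next
    case 2
    then have "beta_levi b a (- c) \<beta> \<alpha> \<nu> \<le> 2250 * \<nu>"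
      using beta_levi_above_one_le a \<nu> \<alpha> by blast
    then show ?thesis by (simp only: beta_levi_swap[of a b c \<alpha> \<beta> \<nu>])
  next
    case 3
    have "a * \<nu> \<le> 1 * \<nu>" "b * \<nu> \<le> 1 * \<nu>" using 3 \<nu> by (intro mult_right_mono; simp)+
    then have "(cmod \<alpha>)^2 \<le> 4 * \<nu>" "(cmod \<beta>)^2 \<le> 4 * \<nu>" using \<alpha> \<beta> by linarith+
    moreover have "c^2 \<le> 1^2" using c mult_le_one[of a b] 3 a b by simp
    then have "\<bar>c\<bar> \<le> 1" using abs_le_square_iff[of c 1] by simp
    ultimately show ?thesis using beta_levi_bounded[OF a b _ \<nu>] by fastforce
  qed
qed

section \<open>The model function and its dilations\<close>

definition beta0 :: "('n::finite) set \<Rightarrow> complex ^ 'n \<Rightarrow> real" where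
  "beta0 F q = 3/4 * (profile (rho1 q) * profile (rho_mixed F q)
     + 2 * (profile' (rho1 q) * profile' (rho_mixed F q) * (cross F q)^2))"

lemma beta0_has_C2_derivs:
  obtains \<beta>' \<beta>'' where "has_C2_derivs (beta0 F) \<beta>' \<beta>''"
    "\<And>q v. levi_hess \<beta>'' q v = beta_levi (rho1 q) (rho_mixed F q) (cross F q)
       (cderiv rho1' q v) (cderiv (rho_mixed' F) q v) ((norm v)^2)"
proof -
  note profile_C2 = profile_has_real_derivative profile'_has_real_derivative continuous_on_profile''
  note profile'_C2 = profile'_has_real_derivative profile''_has_real_derivative continuous_on_profile'''
  note a = has_C2_derivs_rho1 and b = has_C2_derivs_rho_mixed[of F] and c = has_C2_derivs_cross[of F]
  note C2 = has_C2_derivs_cmult[OF has_C2_derivs_add[OF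
      has_C2_derivs_mult[OF has_C2_derivs_compose[OF a profile_C2] has_C2_derivs_compose[OF b profile_C2]]
      has_C2_derivs_cmult[OF has_C2_derivs_mult[OF
        has_C2_derivs_mult[OF has_C2_derivs_compose[OF a profile'_C2] has_C2_derivs_compose[OF b profile'_C2]]
        has_C2_derivs_mult[OF c c]], of 2]], of "3/4"]
  show ?thesis
  proof (rule that[OF has_C2_derivs_cong[OF C2 _ refl refl]], goal_cases)
    case (1 q)
    show ?case by (simp add: beta0_def power2_eq_square)
  next
    case (2 q v)
    txt \<open>The top-level sum is split by \<open>subst\<close> only: used with \<open>simp\<close>, \<open>levi_hess_add\<close> would also
      split the sums produced by the product rule before \<open>levi_hess_mult\<close> can match them.
      The chain rules are instantiated because \<open>\<phi> (f q)\<close> is not a higher-order pattern.\<close>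
    show ?case
      apply (subst levi_hess_cmult, subst levi_hess_add, subst levi_hess_cmult)
      apply (simp only: levi_hess_mult cderiv_mult
          levi_hess_compose[where \<phi>' = profile' and \<phi>'' = profile'']
          levi_hess_compose[where \<phi>' = profile'' and \<phi>'' = profile''']
          cderiv_compose[where \<phi>' = profile'] cderiv_compose[where \<phi>' = profile'']
          levi_hess_rho1 levi_hess_rho_mixed levi_hess_cross cderiv_cross)
      apply (unfold beta_levi_def Let_def cmod_gamma power_divide cmod_power2)
      apply (simp add: power2_eq_square field_simps)
      done
  qed
qed

lemma levi_form_beta0:
  "levi_form (beta0 F) q v = beta_levi (rho1 q) (rho_mixed F q) (cross F q)
     (cderiv rho1' q v) (cderiv (rho_mixed' F) q v) ((norm v)^2)"
proof -
  obtain \<beta>' \<beta>'' where "has_C2_derivs (beta0 F) \<beta>' \<beta>''"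
    and "\<And>q v. levi_hess \<beta>'' q v = beta_levi (rho1 q) (rho_mixed F q) (cross F q)
       (cderiv rho1' q v) (cderiv (rho_mixed' F) q v) ((norm v)^2)"
    using beta0_has_C2_derivs[of F] by blast
  then show ?thesis by (simp add: levi_form_eq_levi_hess)
qed

lemma beta0_nonneg: "0 \<le> beta0 F q"
  unfolding beta0_def
  using profile_bounds(1)[OF rho1_nonneg] profile_bounds(1)[OF rho_mixed_nonneg] profile'_bounds(1)
  by (intro mult_nonneg_nonneg add_nonneg_nonneg) simp_all

lemma beta0_eq_0: "rho1 q = 0 \<or> rho_mixed F q = 0 \<Longrightarrow> beta0 F q = 0"
  using cross_sq_le[of F q] by (auto simp: beta0_def profile_below_half)

lemma beta0_eq_rho_mixed: "1 \<le> rho1 q \<Longrightarrow> rho_mixed F q \<le> 1/2 \<Longrightarrow> beta0 F q = rho_mixed F q"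
  by (simp add: beta0_def profile_above_one profile_below_half)

lemma beta0_eq_rho1: "1 \<le> rho_mixed F q \<Longrightarrow> rho1 q \<le> 1/2 \<Longrightarrow> beta0 F q = rho1 q"
  by (simp add: beta0_def profile_above_one profile_below_half)

lemma levi_form_beta0_nonneg:
  assumes "rho1 q < 1/1000000 \<or> rho_mixed F q < 1/1000000"
  shows "0 \<le> levi_form (beta0 F) q v"
proof -
  note hyps = rho1_nonneg rho_mixed_nonneg zero_le_power2 cderiv_rho1_bound cderiv_rho_mixed_bound
  from assms show ?thesis
  proof
    assume "rho1 q < 1/1000000"
    then show ?thesis
      unfolding levi_form_beta0 using hyps cross_sq_le by (intro beta_levi_nonneg) auto
  next
    assume "rho_mixed F q < 1/1000000"
    then show ?thesis
      unfolding levi_form_beta0 beta_levi_swap[of "rho1 q"]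
      using hyps cross_sq_le[of F q] by (intro beta_levi_nonneg) (auto simp: mult.commute)
  qed
qed

lemma levi_form_beta0_le: "levi_form (beta0 F) q v \<le> 2250 * (norm v)^2"
  unfolding levi_form_beta0
  using rho1_nonneg rho_mixed_nonneg cross_sq_le cderiv_rho1_bound cderiv_rho_mixed_bound
  by (intro beta_levi_le) auto

lemma levi_form_beta0_eq_near_L1:
  "rho1 q \<le> 1/2 \<Longrightarrow> 1 \<le> rho_mixed F q \<Longrightarrow> levi_form (beta0 F) q v = 2 * (norm v)^2"
  unfolding levi_form_beta0 by (rule beta_levi_below_half_above_one)

lemma levi_form_beta0_eq_near_L2:
  "rho_mixed F q \<le> 1/2 \<Longrightarrow> 1 \<le> rho1 q \<Longrightarrow> levi_form (beta0 F) q v = 2 * (norm v)^2"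
  unfolding levi_form_beta0 beta_levi_swap[of "rho1 q"] by (rule beta_levi_below_half_above_one)

definition beta :: "('n::finite) set \<Rightarrow> real \<Rightarrow> complex ^ 'n \<Rightarrow> real" where
  "beta F r z = r^2 * beta0 F (z /\<^sub>R r)"

lemma beta_has_C2_derivs:
  obtains \<beta>' \<beta>'' where "has_C2_derivs (beta F r) \<beta>' \<beta>''"
    "\<And>p v. levi_hess \<beta>'' p v = r^2 * levi_form (beta0 F) (p /\<^sub>R r) (v /\<^sub>R r)"
proof -
  obtain \<beta>' \<beta>'' where C2: "has_C2_derivs (beta0 F) \<beta>' \<beta>''"
    by (rule beta0_has_C2_derivs)
  show ?thesis
  proof (rule that)
    show "has_C2_derivs (beta F r) (\<lambda>p v. r^2 * \<beta>' (p /\<^sub>R r) (v /\<^sub>R r))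
        (\<lambda>p v w. r^2 * \<beta>'' (p /\<^sub>R r) (v /\<^sub>R r) (w /\<^sub>R r))"
      unfolding beta_def[abs_def]
      by (intro has_C2_derivs_cmult has_C2_derivs_compose_linear[OF C2] bounded_linear_scaleR_right)
    show "levi_hess (\<lambda>p v w. r^2 * \<beta>'' (p /\<^sub>R r) (v /\<^sub>R r) (w /\<^sub>R r)) p v
        = r^2 * levi_form (beta0 F) (p /\<^sub>R r) (v /\<^sub>R r)" for p v
      by (simp add: levi_hess_def levi_form_eq_levi_hess[OF C2] Jmul_scaleR algebra_simps)
  qed
qed

lemma C2_on_beta: "C2_on U (beta F r)"
  by (metis beta_has_C2_derivs C2_on_if_has_C2_derivs)

lemma levi_form_beta: "levi_form (beta F r) p v = r^2 * levi_form (beta0 F) (p /\<^sub>R r) (v /\<^sub>R r)"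
  by (metis beta_has_C2_derivs levi_form_eq_levi_hess)

lemma beta_nonneg: "0 \<le> beta F r z"
  unfolding beta_def by (simp add: beta0_nonneg)

lemma frechet_derivative_beta_eq_0:
  "beta F r z = 0 \<Longrightarrow> frechet_derivative (beta F r) (at z) = (\<lambda>v. 0)"
  by (metis beta_has_C2_derivs beta_nonneg frechet_derivative_eq_0_at_zero_of_nonneg)

lemma rho1_scaleR_inverse: "rho1 (z /\<^sub>R r) = rho1 z / r^2"
  by (simp add: rho1_scaleR power_inverse divide_inverse_commute)

lemma rho2_scaleR_inverse: "rho2 k (z /\<^sub>R r) = rho2 k z / r^2"
  by (simp add: rho2_eq_rho_mixed rho_mixed_scaleR power_inverse divide_inverse_commute)

lemma sqrt_less_mult_iff: "0 < r \<Longrightarrow> 0 \<le> t \<Longrightarrow> sqrt x < t * r \<longleftrightarrow> x / r^2 < t^2"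
proof -
  assume "0 < r" "0 \<le> t"
  then have "sqrt x < t * r \<longleftrightarrow> sqrt x < sqrt ((t * r)^2)" by simp
  also have "\<dots> \<longleftrightarrow> x / r^2 < t^2" using \<open>0 < r\<close> by (simp add: pos_divide_less_eq power_mult_distrib)
  finally show ?thesis .
qed

lemma le_sqrt_iff_scaled: "0 < r \<Longrightarrow> r \<le> sqrt x \<longleftrightarrow> 1 \<le> x / r^2"
  using sqrt_less_mult_iff[of r 1 x] by (simp add: not_less[symmetric])

lemma less_sqrt_iff_scaled: "0 < r \<Longrightarrow> r < sqrt x \<longleftrightarrow> 1 < x / r^2"
proof -
  assume "0 < r"
  then have "sqrt (r^2) = r" by simp
  then have "r < sqrt x \<longleftrightarrow> r^2 < x" by (metis real_sqrt_less_iff)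
  also have "\<dots> \<longleftrightarrow> 1 < x / r^2" using \<open>0 < r\<close> by (simp add: pos_less_divide_eq)
  finally show ?thesis .
qed

lemma norm_scaleR_inverse_sq: "r \<noteq> 0 \<Longrightarrow> r^2 * (norm (v /\<^sub>R r))^2 = (norm v)^2"
  by (simp add: power_mult_distrib power_inverse field_simps)

lemma Vset_scaled:
  assumes "0 < r" "0 \<le> D"
  shows "z \<in> Vset k (D * r) \<longleftrightarrow> rho1 (z /\<^sub>R r) < D^2 \<or> rho2 k (z /\<^sub>R r) < D^2"
  unfolding Vset_def rho1_scaleR_inverse rho2_scaleR_inverse using sqrt_less_mult_iff[OF assms] by simp

context
  fixes k :: nat and r D :: real
  assumes r: "0 < r" and D: "0 \<le> D" "D \<le> 1/1000"
begin

lemma Vset_imp_small_rho: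
  assumes "z \<in> Vset k (D * r)"
  shows "rho1 (z /\<^sub>R r) < 1/1000000 \<or> rho2 k (z /\<^sub>R r) < 1/1000000"
proof -
  have "D^2 \<le> (1/1000)^2" using D by (intro power_mono) auto
  moreover have "rho1 (z /\<^sub>R r) < D^2 \<or> rho2 k (z /\<^sub>R r) < D^2"
    using assms Vset_scaled[OF r D(1)] by blast
  ultimately show ?thesis by (auto simp: power_divide)
qed

lemma weakly_psh_on_beta: "weakly_psh_on (Vset k (D * r)) (beta (first_coords k) r)"
  unfolding weakly_psh_on_def
proof (intro conjI C2_on_beta ballI allI)
  fix p v :: "complex ^ ('n::{finite,linorder})" assume "p \<in> Vset k (D * r)"
  then have "0 \<le> levi_form (beta0 (first_coords k)) (p /\<^sub>R r) (v /\<^sub>R r)"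
    using Vset_imp_small_rho by (intro levi_form_beta0_nonneg) (simp add: rho2_eq_rho_mixed)
  then show "0 \<le> levi_form (beta (first_coords k) r) p v" by (simp add: levi_form_beta)
qed

lemma beta_eq_rho2:
  assumes "z \<in> Vset k (D * r)" "r \<le> sqrt (rho1 z)"
  shows "beta (first_coords k) r z = rho2 k z"
proof -
  have "1 \<le> rho1 (z /\<^sub>R r)" using assms(2) r by (simp add: le_sqrt_iff_scaled rho1_scaleR_inverse)
  then have "rho2 k (z /\<^sub>R r) \<le> 1/2" using Vset_imp_small_rho[OF assms(1)] by linarith
  then show ?thesis
    using \<open>1 \<le> rho1 (z /\<^sub>R r)\<close> r
    by (simp add: beta_def beta0_eq_rho_mixed rho2_eq_rho_mixed[symmetric] rho2_scaleR_inverse)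
qed

lemma beta_eq_rho1:
  assumes "z \<in> Vset k (D * r)" "r \<le> sqrt (rho2 k z)"
  shows "beta (first_coords k) r z = rho1 z"
proof -
  have "1 \<le> rho2 k (z /\<^sub>R r)" using assms(2) r by (simp add: le_sqrt_iff_scaled rho2_scaleR_inverse)
  then have "rho1 (z /\<^sub>R r) \<le> 1/2" using Vset_imp_small_rho[OF assms(1)] by linarith
  then show ?thesis
    using \<open>1 \<le> rho2 k (z /\<^sub>R r)\<close> r
    by (simp add: beta_def beta0_eq_rho1 rho2_eq_rho_mixed[symmetric] rho1_scaleR_inverse)
qed

lemma levi_equiv_euclid_on_beta_near_L1:
  "levi_equiv_euclid_on ({z. sqrt (rho2 k z) > r} \<inter> Vset k (D * r)) (beta (first_coords k) r)"
  unfolding levi_equiv_euclid_on_def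
proof (intro exI[of _ 2] conjI ballI allI)
  fix p v :: "complex ^ ('n::{finite,linorder})" assume p: "p \<in> {z. sqrt (rho2 k z) > r} \<inter> Vset k (D * r)"
  then have "1 < rho2 k (p /\<^sub>R r)" using r by (simp add: less_sqrt_iff_scaled rho2_scaleR_inverse)
  moreover from this have "rho1 (p /\<^sub>R r) \<le> 1/2" using Vset_imp_small_rho p by fastforce
  ultimately have "levi_form (beta (first_coords k) r) p v = 2 * (norm v)^2"
    using r by (simp add: levi_form_beta levi_form_beta0_eq_near_L1 rho2_eq_rho_mixed
        power_mult_distrib power_inverse field_simps)
  then show "2 * (norm v)^2 \<le> levi_form (beta (first_coords k) r) p v"
    "levi_form (beta (first_coords k) r) p v \<le> 2 * (norm v)^2" by simp_all
qed simp_all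

lemma levi_equiv_euclid_on_beta_near_L2:
  "levi_equiv_euclid_on ({z. sqrt (rho1 z) > r} \<inter> Vset k (D * r)) (beta (first_coords k) r)"
  unfolding levi_equiv_euclid_on_def
proof (intro exI[of _ 2] conjI ballI allI)
  fix p v :: "complex ^ ('n::{finite,linorder})" assume p: "p \<in> {z. sqrt (rho1 z) > r} \<inter> Vset k (D * r)"
  then have "1 < rho1 (p /\<^sub>R r)" using r by (simp add: less_sqrt_iff_scaled rho1_scaleR_inverse)
  moreover from this have "rho2 k (p /\<^sub>R r) \<le> 1/2" using Vset_imp_small_rho p by fastforce
  ultimately have "levi_form (beta (first_coords k) r) p v = 2 * (norm v)^2"
    using r by (simp add: levi_form_beta levi_form_beta0_eq_near_L2 rho2_eq_rho_mixed
        power_mult_distrib power_inverse field_simps)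
  then show "2 * (norm v)^2 \<le> levi_form (beta (first_coords k) r) p v"
    "levi_form (beta (first_coords k) r) p v \<le> 2 * (norm v)^2" by simp_all
qed simp_all

end

lemma levi_dominated_on_beta: "r \<noteq> 0 \<Longrightarrow> levi_dominated_on UNIV (beta F r)"
  unfolding levi_dominated_on_def levi_form_beta
proof (intro exI[of _ 2250] conjI ballI allI)
  fix p v assume "r \<noteq> 0"
  have "r^2 * levi_form (beta0 F) (p /\<^sub>R r) (v /\<^sub>R r) \<le> r^2 * (2250 * (norm (v /\<^sub>R r))^2)"
    by (intro mult_left_mono levi_form_beta0_le) simp
  also have "\<dots> = 2250 * (norm v)^2" using norm_scaleR_inverse_sq[OF \<open>r \<noteq> 0\<close>] by simp
  finally show "r^2 * levi_form (beta0 F) (p /\<^sub>R r) (v /\<^sub>R r) \<le> 2250 * (norm v)^2" .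
qed simp

lemma beta_vanishes_on_L1:
  assumes "rho1 z = 0"
  shows "beta F r z = 0" "frechet_derivative (beta F r) (at z) = (\<lambda>v. 0)"
proof -
  show "beta F r z = 0"
    using assms by (simp add: beta_def beta0_eq_0 rho1_scaleR_inverse)
  then show "frechet_derivative (beta F r) (at z) = (\<lambda>v. 0)" by (rule frechet_derivative_beta_eq_0)
qed

lemma beta_vanishes_on_L2:
  assumes "rho2 k z = 0"
  shows "beta (first_coords k) r z = 0" "frechet_derivative (beta (first_coords k) r) (at z) = (\<lambda>v. 0)"
proof -
  show "beta (first_coords k) r z = 0"
    using assms rho2_scaleR_inverse[where k = k and z = z and r = r]
    by (simp add: beta_def beta0_eq_0 rho2_eq_rho_mixed)
  then show "frechet_derivative (beta (first_coords k) r) (at z) = (\<lambda>v. 0)"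
    by (rule frechet_derivative_beta_eq_0)
qed

theorem proposition2p7:
  fixes k :: nat
  assumes "k \<le> CARD('n::{finite,linorder})"
  shows "\<exists>r0>0. \<forall>r. 0 < r \<and> r < r0 \<longrightarrow>
    (\<exists>D (\<beta> :: complex ^ ('n::{finite,linorder}) \<Rightarrow> real). 0 < D \<and> D < 1 \<and>
       (\<forall>z. \<beta> z \<ge> 0) \<and>
       C2_on UNIV \<beta> \<and>
       weakly_psh_on (Vset k (D * r)) \<beta> \<and>
       (\<forall>z \<in> Vset k (D * r). sqrt (rho1 z) \<ge> r \<longrightarrow> \<beta> z = rho2 k z) \<and>
       (\<forall>z \<in> Vset k (D * r). sqrt (rho2 k z) \<ge> r \<longrightarrow> \<beta> z = rho1 z) \<and>
       (\<forall>z. rho1 z = 0 \<longrightarrow> \<beta> z = 0 \<and> frechet_derivative \<beta> (at z) = (\<lambda>v. 0)) \<and>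
       (\<forall>z. rho2 k z = 0 \<longrightarrow> \<beta> z = 0 \<and> frechet_derivative \<beta> (at z) = (\<lambda>v. 0)) \<and>
       levi_dominated_on UNIV \<beta> \<and>
       levi_equiv_euclid_on ({z. sqrt (rho2 k z) > r} \<inter> Vset k (D * r)) \<beta> \<and>
       levi_equiv_euclid_on ({z. sqrt (rho1 z) > r} \<inter> Vset k (D * r)) \<beta>)"
proof (rule exI[of _ 1], intro conjI allI impI, goal_cases)
  case (2 r)
  then have r: "0 < r" by simp
  have D: "0 \<le> (1/1000::real)" "(1/1000::real) \<le> 1/1000" by simp_all
  show ?case
    by (intro exI[of _ "1/1000"] exI[of _ "beta (first_coords k) r"] conjI allI ballI impI
        beta_nonneg C2_on_beta weakly_psh_on_beta[OF r D] beta_eq_rho2[OF r D] beta_eq_rho1[OF r D]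
        beta_vanishes_on_L1 beta_vanishes_on_L2 levi_dominated_on_beta
        levi_equiv_euclid_on_beta_near_L1[OF r D] levi_equiv_euclid_on_beta_near_L2[OF r D])
      (use r in auto)
qed simp

end
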